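(* Let $\Sigma$ be an alphabet with $|\Sigma|\ge 3$. A function $f\colon\Sigma^*\to\Sigma^*$ is RCP if and only if there exist $n\in\mathbb{N}$ and words $w_0,\ldots,w_n\in\Sigma^*$ such that $f(x)=w_0xw_1x\cdots w_{n-1}xw_n$ for all $x\in\Sigma^*$.
   Context: $\Sigma^*$ denotes the free monoid over $\Sigma$: finite words over $\Sigma$ with concatenation, unit the empty word $\varepsilon$. A restricted congruence on $\Sigma^*$ is the kernel $\{(u,v)\mid \varphi(u)=\varphi(v)\}$ of a monoid morphism $\varphi\colon\Sigma^*\to\Sigma^*$. A function $f\colon(\Sigma^* )^k\to\Sigma^*$ is RCP if it preserves every restricted congruence, i.e. for every monoid morphism $\varphi\colon\Sigma^*\to\Sigma^*$ and all $u_1,\ldots,u_k,v_1,\ldots,v_k\in\Sigma^*$ with $\varphi(u_i)=\varphi(v_i)$ for all $i$, we have $\varphi(f(u_1,\ldots,u_k))=\varphi(f(v_1,\ldots,v_k))$. *)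

theory Defs
  imports Main
begin

definition monoid_morphism :: "('a list \<Rightarrow> 'b list) \<Rightarrow> bool" where
  "monoid_morphism \<phi> \<longleftrightarrow> \<phi> [] = [] \<and> (\<forall>u v. \<phi> (u @ v) = \<phi> u @ \<phi> v)"

definition RCP :: "('a list \<Rightarrow> 'a list) \<Rightarrow> bool" where
  "RCP f \<longleftrightarrow> (\<forall>\<phi> :: 'a list \<Rightarrow> 'a list. monoid_morphism \<phi> \<longrightarrow>
      (\<forall>u v. \<phi> u = \<phi> v \<longrightarrow> \<phi> (f u) = \<phi> (f v)))"

fun pattern :: "'a list list \<Rightarrow> 'a list \<Rightarrow> 'a list" where
  "pattern [] x = []"
| "pattern [w] x = w"
| "pattern (w # ws) x = w @ x @ pattern ws x"

end

theory Submission
  imports Defs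
begin

text \<open>
  Every morphism commutes with a pattern, so patterns are RCP. Conversely, erasing a letter
  and identifying two letters are morphisms; applied to an RCP function f they show that
  f [x] arises from f [] by inserting copies of x at positions that do not depend on x.
  Peeling off first letters, which needs a third letter to decide whether the head of f [x]
  is x or the head of f [], yields f [x] = pattern ws [x] with f [] = concat ws. Finally, two RCP
  functions that agree on words of length at most one agree everywhere: for u = x # y # q,
  erasing x, erasing y and sending a third letter c to x y (or, if x = y, sending two other
  letters to x x) each identify u with a shorter word, and these three morphisms together
  determine a word.
\<close>

lemma pattern_hom:
  assumes "monoid_morphism \<phi>"
  shows "\<phi> (pattern ws x) = pattern (map \<phi> ws) (\<phi> x)"
  using assms by (induction ws x rule: pattern.induct) (auto simp: monoid_morphism_def)

lemma RCP_pattern: "RCP (pattern ws)"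
  unfolding RCP_def by (auto simp: pattern_hom)

lemma pattern_Nil: "pattern ws [] = concat ws"
  by (induction ws "[] :: 'a list" rule: pattern.induct) auto

lemma pattern_replicate_Nil: "pattern ([] # replicate n []) [x] = replicate n x"
  by (induction n) auto

lemma pattern_Nil_Cons: "ws \<noteq> [] \<Longrightarrow> pattern ([] # ws) [x] = x # pattern ws [x]"
  by (cases ws) auto

lemma pattern_Cons_hd: "ws \<noteq> [] \<Longrightarrow> pattern ((d # hd ws) # tl ws) x = d # pattern ws x"
  by (cases ws; cases "tl ws") auto

lemma monoid_morphism_concat_map: "monoid_morphism (\<lambda>u. concat (map g u))"
  by (simp add: monoid_morphism_def)

lemma RCP_concat_map:
  fixes g :: "'a \<Rightarrow> 'a list"
  assumes "RCP f" "concat (map g u) = concat (map g v)"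
  shows "concat (map g (f u)) = concat (map g (f v))"
  using assms monoid_morphism_concat_map unfolding RCP_def by blast

lemma RCP_map:
  fixes h :: "'a \<Rightarrow> 'a"
  assumes "RCP f" "map h u = map h v"
  shows "map h (f u) = map h (f v)"
  using RCP_concat_map[OF assms(1), of "\<lambda>t. [h t]" u v] assms(2)
  unfolding concat_map_singleton .

lemma third_letter:
  assumes "card (UNIV :: 'a::finite set) \<ge> 3"
  shows "\<exists>c::'a. c \<noteq> a \<and> c \<noteq> b"
proof (rule ccontr)
  assume "\<not> ?thesis"
  then have "UNIV = {a, b}" by auto
  moreover have "card {a, b} \<le> 2" by (cases "a = b") auto
  ultimately have "card (UNIV :: 'a set) \<le> 2" by simp
  with assms show False by simp
qed

definition letter_subst :: "'a \<Rightarrow> 'a list \<Rightarrow> 'a \<Rightarrow> 'a list" where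
  "letter_subst c s t = (if t = c then s else [t])"

lemma concat_map_letter_erase: "concat (map (letter_subst x []) u) = filter (\<lambda>t. t \<noteq> x) u"
  by (induction u) (auto simp: letter_subst_def)

definition letter_insertion :: "'a list \<Rightarrow> ('a \<Rightarrow> 'a list) \<Rightarrow> bool" where
  "letter_insertion w F \<longleftrightarrow> (\<forall>x. filter (\<lambda>y. y \<noteq> x) (F x) = filter (\<lambda>y. y \<noteq> x) w)"

definition respects_identification :: "('a \<Rightarrow> 'a list) \<Rightarrow> bool" where
  "respects_identification F \<longleftrightarrow> (\<forall>a b. map (id(b := a)) (F a) = map (id(b := a)) (F b))"

lemma respects_identification_hd:
  assumes "respects_identification F" "F a \<noteq> []" "hd (F a) \<in> {a, b}"
  shows "F b \<noteq> [] \<and> hd (F b) \<in> {a, b}"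
proof -
  have eq: "map (id(b := a)) (F a) = map (id(b := a)) (F b)"
    using assms(1) unfolding respects_identification_def by blast
  then have "F b \<noteq> []" using assms(2) by auto
  moreover have "(id(b := a)) (hd (F b)) = a"
    using eq assms(2,3) \<open>F b \<noteq> []\<close> by (metis hd_map fun_upd_apply id_apply insert_iff singletonD)
  ultimately show ?thesis by (auto split: if_splits)
qed

lemma letter_insertion_hd:
  assumes "letter_insertion (d # w) F" "x \<noteq> d"
  shows "F x \<noteq> [] \<and> hd (F x) \<in> {x, d}"
proof -
  have "filter (\<lambda>y. y \<noteq> x) (F x) = d # filter (\<lambda>y. y \<noteq> x) w"
    using assms unfolding letter_insertion_def by simp
  then show ?thesis by (cases "F x") (auto split: if_splits)
qed

lemma letter_insertion_Nil:
  assumes "letter_insertion [] F" "respects_identification F"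
  shows "\<exists>n. \<forall>x. F x = replicate n x"
proof -
  have "F x = replicate (length (F x)) x" for x
  proof -
    have "filter (\<lambda>y. y \<noteq> x) (F x) = []"
      using assms(1) unfolding letter_insertion_def by simp
    then show ?thesis by (simp add: filter_empty_conv replicate_length_same)
  qed
  moreover have "length (F x) = length (F y)" for x y
    using assms(2) length_map unfolding respects_identification_def by metis
  ultimately have "\<forall>x. F x = replicate (length (F undefined)) x" by metis
  then show ?thesis ..
qed

lemma all_hd_self:
  fixes F :: "'a \<Rightarrow> 'a list"
  assumes three: "\<And>a b::'a. \<exists>c. c \<noteq> a \<and> c \<noteq> b"
    and ins: "letter_insertion (d # w) F" and resp: "respects_identification F"
    and a: "a \<noteq> d" "F a \<noteq> []" "hd (F a) = a"
  shows "F x \<noteq> [] \<and> hd (F x) = x"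
proof -
  have other: "F x \<noteq> [] \<and> hd (F x) = x" if "x \<noteq> d" for x
    using respects_identification_hd[OF resp a(2), of x] a(1,3) letter_insertion_hd[OF ins that]
    by auto
  obtain b where b: "b \<noteq> a" "b \<noteq> d" using three by blast
  have "F d \<noteq> [] \<and> hd (F d) \<in> {a, d}" "hd (F d) \<in> {b, d}"
    using respects_identification_hd[OF resp a(2), of d] a(3)
      respects_identification_hd[OF resp, of b d] other[OF b(2)] by auto
  with b(1) other show ?thesis by (cases "x = d") auto
qed

lemma all_hd_first_letter:
  fixes F :: "'a \<Rightarrow> 'a list"
  assumes three: "\<And>a b::'a. \<exists>c. c \<noteq> a \<and> c \<noteq> b"
    and ins: "letter_insertion (d # w) F" and resp: "respects_identification F"
    and no_self: "\<forall>a. a \<noteq> d \<longrightarrow> F a = [] \<or> hd (F a) \<noteq> a"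
  shows "F x \<noteq> [] \<and> hd (F x) = d"
proof -
  have other: "F x \<noteq> [] \<and> hd (F x) = d" if "x \<noteq> d" for x
    using letter_insertion_hd[OF ins that] no_self that by auto
  obtain a where a: "a \<noteq> d" using three[of d d] by blast
  obtain b where b: "b \<noteq> a" "b \<noteq> d" using three by blast
  have "F d \<noteq> [] \<and> hd (F d) \<in> {a, d}" "hd (F d) \<in> {b, d}"
    using respects_identification_hd[OF resp, of a d] other[OF a]
      respects_identification_hd[OF resp, of b d] other[OF b(2)] by auto
  with b(1) other show ?thesis by (cases "x = d") auto
qed

lemma peel_inserted_letter:
  assumes "letter_insertion w F" "respects_identification F" "\<And>x. F x = x # G x"
  shows "letter_insertion w G \<and> respects_identification G"
proof
  show "letter_insertion w G"
    using assms(1) unfolding letter_insertion_def assms(3) by simp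
  have "map (id(b := a)) (a # G a) = map (id(b := a)) (b # G b)" for a b
    using assms(2) unfolding respects_identification_def assms(3) by blast
  then have "map (id(b := a)) (G a) = map (id(b := a)) (G b)" for a b
    by (metis list.inject list.simps(9))
  then show "respects_identification G"
    unfolding respects_identification_def by blast
qed

lemma peel_common_letter:
  assumes "letter_insertion (d # w) F" "respects_identification F" "\<And>x. F x = d # G x"
  shows "letter_insertion w G \<and> respects_identification G"
proof
  have eq: "filter (\<lambda>y. y \<noteq> x) (d # G x) = filter (\<lambda>y. y \<noteq> x) (d # w)" for x
    using assms(1) unfolding letter_insertion_def assms(3) by blast
  have "filter (\<lambda>y. y \<noteq> x) (G x) = filter (\<lambda>y. y \<noteq> x) w" for x
    using eq[of x] by (cases "x = d") auto
  then show "letter_insertion w G"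
    unfolding letter_insertion_def by blast
  have "map (id(b := a)) (d # G a) = map (id(b := a)) (d # G b)" for a b
    using assms(2) unfolding respects_identification_def assms(3) by blast
  then have "map (id(b := a)) (G a) = map (id(b := a)) (G b)" for a b
    by (metis list.inject list.simps(9))
  then show "respects_identification G"
    unfolding respects_identification_def by blast
qed

lemma single_letter_pattern:
  fixes F :: "'a \<Rightarrow> 'a list"
  assumes three: "\<And>a b::'a. \<exists>c. c \<noteq> a \<and> c \<noteq> b"
    and "letter_insertion w F" "respects_identification F"
  shows "\<exists>ws. ws \<noteq> [] \<and> concat ws = w \<and> (\<forall>x. F x = pattern ws [x])"
  using assms(2,3)
proof (induction "length (F undefined)" arbitrary: F w rule: less_induct)
  case less
  show ?case
  proof (cases w)
    case Nil
    then obtain n where "\<forall>x. F x = replicate n x"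
      using letter_insertion_Nil less.prems by blast
    then have "\<forall>x. F x = pattern ([] # replicate n []) [x]"
      by (simp add: pattern_replicate_Nil)
    with Nil show ?thesis by (intro exI[of _ "[] # replicate n []"]) simp
  next
    case (Cons d w')
    define G where "G x = tl (F x)" for x
    show ?thesis
    proof (cases "\<exists>a. a \<noteq> d \<and> F a \<noteq> [] \<and> hd (F a) = a")
      case True
      then have F: "F x = x # G x" for x
        using all_hd_self[OF three less.prems[unfolded Cons]] unfolding G_def
        by (metis list.collapse)
      then obtain ws where "ws \<noteq> []" "concat ws = w" "\<forall>x. G x = pattern ws [x]"
        using less.hyps[of G w] peel_inserted_letter[OF less.prems] by force
      with F show ?thesis
        by (intro exI[of _ "[] # ws"]) (simp add: pattern_Nil_Cons)
    next
      case False
      then have F: "F x = d # G x" for x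
        using all_hd_first_letter[OF three less.prems[unfolded Cons]] unfolding G_def
        by (metis list.collapse)
      then obtain ws where "ws \<noteq> []" "concat ws = w'" "\<forall>x. G x = pattern ws [x]"
        using less.hyps[of G w'] peel_common_letter[OF less.prems[unfolded Cons]] by force
      with F Cons show ?thesis
        by (intro exI[of _ "(d # hd ws) # tl ws"]) (auto simp: pattern_Cons_hd neq_Nil_conv)
    qed
  qed
qed

lemma RCP_letter_insertion:
  fixes f :: "'a list \<Rightarrow> 'a list"
  assumes "RCP f"
  shows "letter_insertion (f []) (\<lambda>x. f [x])"
  unfolding letter_insertion_def
proof
  fix x :: 'a
  have "concat (map (letter_subst x []) [x]) = concat (map (letter_subst x []) [])"
    by (simp add: letter_subst_def)
  from RCP_concat_map[OF assms this]
  show "filter (\<lambda>y. y \<noteq> x) (f [x]) = filter (\<lambda>y. y \<noteq> x) (f [])"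
    by (simp add: concat_map_letter_erase)
qed

lemma RCP_respects_identification:
  assumes "RCP f"
  shows "respects_identification (\<lambda>x. f [x])"
  unfolding respects_identification_def
  using RCP_map[OF assms] by simp

definition separating :: "('a \<Rightarrow> 'a list) set \<Rightarrow> bool" where
  "separating S \<longleftrightarrow> (\<forall>s. \<exists>g\<in>S. g s \<noteq> []) \<and>
     (\<forall>s t. s \<noteq> t \<longrightarrow> (\<exists>g\<in>S. g s \<noteq> [] \<and> g t \<noteq> [] \<and> hd (g s) \<noteq> hd (g t)))"

lemma separating_concat_map_eq:
  assumes sep: "separating S" and eq: "\<forall>g\<in>S. concat (map g u) = concat (map g v)"
  shows "u = v"
  using eq
proof (induction u arbitrary: v)
  case Nil
  with sep show ?case
    unfolding separating_def by (cases v) fastforce+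
next
  case (Cons x u)
  show ?case
  proof (cases v)
    case Nil
    with Cons.prems sep show ?thesis
      unfolding separating_def by fastforce
  next
    case (Cons y v')
    show ?thesis
    proof (cases "x = y")
      case True
      with Cons.prems Cons.IH[of v'] \<open>v = y # v'\<close> show ?thesis by simp
    next
      case False
      then obtain g where g: "g \<in> S" "g x \<noteq> []" "g y \<noteq> []" "hd (g x) \<noteq> hd (g y)"
        using sep unfolding separating_def by blast
      then have "g x @ concat (map g u) = g y @ concat (map g v')"
        using Cons.prems \<open>v = y # v'\<close> by simp
      then have "hd (g x) = hd (g y)"
        using g(2,3) by (metis hd_append2)
      with g(4) show ?thesis by contradiction
    qed
  qed
qed

lemma separating_erase_erase_subst:
  assumes "x \<noteq> y" "c \<noteq> x" "c \<noteq> y"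
  shows "separating {letter_subst x [], letter_subst y [], letter_subst c [x, y]}"
  using assms unfolding separating_def letter_subst_def by auto

lemma separating_erase_subst_subst:
  assumes "c \<noteq> x" "b \<noteq> x" "b \<noteq> c"
  shows "separating {letter_subst x [], letter_subst c [x, x], letter_subst b [x, x]}"
  using assms unfolding separating_def letter_subst_def by auto

definition shortenable :: "('a \<Rightarrow> 'a list) \<Rightarrow> 'a list \<Rightarrow> bool" where
  "shortenable g u \<longleftrightarrow> (\<exists>v. length v < length u \<and> concat (map g v) = concat (map g u))"

lemma shortenable_erase:
  assumes "x \<in> set u"
  shows "shortenable (letter_subst x []) u"
  unfolding shortenable_def
  by (rule exI[of _ "filter (\<lambda>t. t \<noteq> x) u"])
    (simp add: concat_map_letter_erase length_filter_less[OF assms])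

lemma shortenable_subst:
  assumes "c \<noteq> x" "c \<noteq> y"
  shows "shortenable (letter_subst c [x, y]) (x # y # q)"
  unfolding shortenable_def
  using assms by (intro exI[of _ "c # q"]) (auto simp: letter_subst_def)

lemma separating_shortenable_family:
  fixes u :: "'a list"
  assumes three: "\<And>a b::'a. \<exists>c. c \<noteq> a \<and> c \<noteq> b" and "2 \<le> length u"
  shows "\<exists>S. separating S \<and> (\<forall>g\<in>S. shortenable g u)"
proof -
  obtain x y q where u: "u = x # y # q"
    using assms(2) by (metis Suc_le_length_iff numeral_2_eq_2)
  obtain c where c: "c \<noteq> x" "c \<noteq> y" using three by blast
  show ?thesis
  proof (cases "x = y")
    case True
    obtain b where b: "b \<noteq> x" "b \<noteq> c" using three by blast
    show ?thesis
      using separating_erase_subst_subst[OF c(1) b(1) b(2)] shortenable_erase[of x u]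
        shortenable_subst[OF c] shortenable_subst[OF b(1), of x] b(1) u True by auto
  next
    case False
    show ?thesis
      using separating_erase_erase_subst[OF False c] shortenable_erase[of x u]
        shortenable_erase[of y u] shortenable_subst[OF c] u by auto
  qed
qed

lemma RCP_eq_if_eq_on_short_words:
  fixes f h :: "'a list \<Rightarrow> 'a list"
  assumes three: "\<And>a b::'a. \<exists>c. c \<noteq> a \<and> c \<noteq> b"
    and "RCP f" "RCP h" and short: "\<And>u. length u \<le> 1 \<Longrightarrow> f u = h u"
  shows "f u = h u"
proof (induction u rule: length_induct)
  case (1 u)
  show ?case
  proof (cases "length u \<le> 1")
    case False
    then have "2 \<le> length u" by simp
    then obtain S where S: "separating S" "\<forall>g\<in>S. shortenable g u"
      using separating_shortenable_family[OF three] by blast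
    have "\<forall>g\<in>S. concat (map g (f u)) = concat (map g (h u))"
    proof
      fix g assume "g \<in> S"
      obtain v where v: "length v < length u" "concat (map g v) = concat (map g u)"
        using S(2) \<open>g \<in> S\<close> unfolding shortenable_def by blast
      have "concat (map g (f u)) = concat (map g (f v))"
        using RCP_concat_map[OF assms(2) v(2)] by simp
      also have "\<dots> = concat (map g (h v))"
        using 1 v(1) by simp
      also have "\<dots> = concat (map g (h u))"
        using RCP_concat_map[OF assms(3) v(2)] .
      finally show "concat (map g (f u)) = concat (map g (h u))" .
    qed
    then show ?thesis by (rule separating_concat_map_eq[OF S(1)])
  qed (rule short)
qed

theorem mainTheorem3:
  fixes f :: "'a::finite list \<Rightarrow> 'a list"
  assumes "card (UNIV :: 'a set) \<ge> 3"
  shows "RCP f \<longleftrightarrow>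
    (\<exists>n::nat. \<exists>ws :: 'a list list. length ws = Suc n \<and> (\<forall>x. f x = pattern ws x))"
proof
  assume "\<exists>n ws. length ws = Suc n \<and> (\<forall>x. f x = pattern ws x)"
  then obtain ws where "f = pattern ws" by blast
  then show "RCP f" using RCP_pattern by simp
next
  assume rcp: "RCP f"
  have three: "\<And>a b::'a. \<exists>c. c \<noteq> a \<and> c \<noteq> b"
    using third_letter[OF assms] by blast
  obtain ws where ws: "ws \<noteq> []" "concat ws = f []" "\<forall>x. f [x] = pattern ws [x]"
    using single_letter_pattern[OF three RCP_letter_insertion[OF rcp]
        RCP_respects_identification[OF rcp]] by blast
  have "f u = pattern ws u" for u
  proof (rule RCP_eq_if_eq_on_short_words[OF three rcp RCP_pattern])
    fix v :: "'a list"
    assume "length v \<le> 1"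
    then consider "v = []" | x where "v = [x]"
      by (cases v) auto
    then show "f v = pattern ws v"
      using ws by cases (auto simp: pattern_Nil)
  qed
  moreover obtain n where "length ws = Suc n"
    using ws(1) by (cases ws) auto
  ultimately show "\<exists>n ws. length ws = Suc n \<and> (\<forall>x. f x = pattern ws x)"
    by blast
qed

end
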